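(* For $1\le i\le n$ let $f_i:\mathbb{R}\to\mathbb{R}$ be a convex function that is bounded below, let $a_1,\dots,a_n\ge 0$, and define $g:\mathbb{Z}^n\to\mathbb{R}$ by $g(\vec y)=\sum_{i=1}^n a_if_i(y_i)$. Then $(\mathbb{Z}^n,g)$ is an Ameso($0$) pair.
   Context: Floors and ceilings of vectors are taken componentwise. A set $D^n\subseteq\mathbb{Z}^n$ is an Ameso set if $\lceil(\vec x+\vec y)/2\rceil,\lfloor(\vec x+\vec y)/2\rfloor\in D^n$ for all $\vec x,\vec y\in D^n$. For $C\ge 0$, $(D^n,f)$ is an Ameso($C$) pair if $D^n$ is an Ameso set, $f:D^n\to\mathbb{R}$ is bounded below, and $f(\vec x)+f(\vec y)+C\ge f(\lceil(\vec x+\vec y)/2\rceil)+f(\lfloor(\vec x+\vec y)/2\rfloor)$ for all $\vec x,\vec y\in D^n$. *)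

theory Defs
  imports "HOL-Analysis.Analysis"
begin

definition mid_ceil :: "int ^ 'n \<Rightarrow> int ^ 'n \<Rightarrow> int ^ 'n" where
  "mid_ceil x y = (\<chi> i. \<lceil>(real_of_int (x $ i) + real_of_int (y $ i)) / 2\<rceil>)"

definition mid_floor :: "int ^ 'n \<Rightarrow> int ^ 'n \<Rightarrow> int ^ 'n" where
  "mid_floor x y = (\<chi> i. \<lfloor>(real_of_int (x $ i) + real_of_int (y $ i)) / 2\<rfloor>)"

definition ameso_set :: "(int ^ 'n) set \<Rightarrow> bool" where
  "ameso_set D \<longleftrightarrow> (\<forall>x\<in>D. \<forall>y\<in>D. mid_ceil x y \<in> D \<and> mid_floor x y \<in> D)"

definition ameso_pair :: "real \<Rightarrow> (int ^ 'n) set \<Rightarrow> (int ^ 'n \<Rightarrow> real) \<Rightarrow> bool" where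
  "ameso_pair C D f \<longleftrightarrow> ameso_set D \<and> bdd_below (f ` D) \<and>
     (\<forall>x\<in>D. \<forall>y\<in>D. f x + f y + C \<ge> f (mid_ceil x y) + f (mid_floor x y))"

end

theory Submission
  imports Defs
begin

text \<open>Rounding the midpoint of two integers x \<le> y down and up gives two integers in [x, y]
  with the same sum x + y. For a convex function of one variable, moving two points apart
  while keeping their sum fixed can only increase the sum of the values, so each weighted
  summand of g satisfies the Ameso(0) inequality, and nonnegative weights preserve it.\<close>

lemma convex_on_inner_pair_le:
  fixes h :: "real \<Rightarrow> real"
  assumes convex: "convex_on S h" and "x \<in> S" "y \<in> S"
    and "x \<le> p" "p \<le> y" and sum_eq: "p + q = x + y"
  shows "h p + h q \<le> h x + h y"
proof (cases "x = y")
  case True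
  with assms show ?thesis by simp
next
  case False
  define t where "t = (p - x) / (y - x)"
  have "0 \<le> t" "t \<le> 1"
    using False assms by (auto simp: t_def field_simps)
  have "t * (y - x) = p - x"
    using False by (simp add: t_def)
  then have p_eq: "p = (1 - t) *\<^sub>R x + t *\<^sub>R y"
    and q_eq: "q = (1 - (1 - t)) *\<^sub>R x + (1 - t) *\<^sub>R y"
    using sum_eq by (simp_all add: algebra_simps)
  have "h p \<le> (1 - t) * h x + t * h y"
    unfolding p_eq using \<open>0 \<le> t\<close> \<open>t \<le> 1\<close> assms by (intro convex_onD[OF convex]) auto
  moreover have "h q \<le> (1 - (1 - t)) * h x + (1 - t) * h y"
    unfolding q_eq using \<open>0 \<le> t\<close> \<open>t \<le> 1\<close> assms by (intro convex_onD[OF convex]) auto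
  ultimately show ?thesis
    by (simp add: algebra_simps)
qed

lemma floor_half_of_int: "\<lfloor>real_of_int k / 2\<rfloor> = k div 2"
  by (metis floor_divide_of_int_eq of_int_numeral)

lemma ceiling_half_plus_floor_half: "\<lceil>real_of_int k / 2\<rceil> + \<lfloor>real_of_int k / 2\<rfloor> = k"
proof -
  have "\<lceil>real_of_int k / 2\<rceil> = - ((- k) div 2)"
    by (metis ceiling_def floor_divide_of_int_eq minus_divide_left of_int_minus of_int_numeral)
  then show ?thesis
    unfolding floor_half_of_int by presburger
qed

lemma convex_on_rounded_midpoints_le:
  fixes h :: "real \<Rightarrow> real" and x y :: int
  defines "m \<equiv> (real_of_int x + real_of_int y) / 2"
  assumes convex: "convex_on S h" and "real_of_int x \<in> S" "real_of_int y \<in> S"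
  shows "h \<lceil>m\<rceil> + h \<lfloor>m\<rfloor> \<le> h x + h y"
proof -
  have sum_eq: "real_of_int \<lfloor>m\<rfloor> + real_of_int \<lceil>m\<rceil> = real_of_int x + real_of_int y"
    using ceiling_half_plus_floor_half[of "x + y"] unfolding m_def
    by (metis add.commute of_int_add)
  have between: "min x y \<le> \<lfloor>m\<rfloor>" "\<lfloor>m\<rfloor> \<le> max x y"
    using floor_half_of_int[of "x + y"] unfolding m_def by simp_all
  show ?thesis
  proof (cases "x \<le> y")
    case True
    with between sum_eq show ?thesis
      using convex_on_inner_pair_le[OF convex \<open>real_of_int x \<in> S\<close> \<open>real_of_int y \<in> S\<close>]
      by (simp add: add.commute)
  next
    case False
    with between sum_eq show ?thesis
      using convex_on_inner_pair_le[OF convex \<open>real_of_int y \<in> S\<close> \<open>real_of_int x \<in> S\<close>]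
      by (simp add: add.commute)
  qed
qed

theorem mainTheorem8:
  fixes f :: "'n::finite \<Rightarrow> real \<Rightarrow> real" and a :: "'n \<Rightarrow> real"
    and g :: "int ^ 'n \<Rightarrow> real"
  assumes "\<And>i. convex_on UNIV (f i)"
    and "\<And>i. bdd_below (range (f i))"
    and "\<And>i. a i \<ge> 0"
    and "\<And>y. g y = (\<Sum>i\<in>UNIV. a i * f i (real_of_int (y $ i)))"
  shows "ameso_pair 0 UNIV g"
proof -
  obtain L where L: "\<And>i z. L i \<le> f i z"
    using assms(2) unfolding bdd_below_def by (metis rangeI)
  have "(\<Sum>i\<in>UNIV. a i * L i) \<le> g y" for y
    unfolding assms(4) by (intro sum_mono mult_left_mono L assms(3))
  then have "bdd_below (range g)"
    by (intro bdd_belowI) auto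
  moreover have "g (mid_ceil x y) + g (mid_floor x y) \<le> g x + g y" for x y
    unfolding assms(4) mid_ceil_def mid_floor_def sum.distrib[symmetric] vec_lambda_beta
      distrib_left[symmetric]
    by (intro sum_mono mult_left_mono convex_on_rounded_midpoints_le[OF assms(1)] assms(3)) auto
  ultimately show ?thesis
    by (simp add: ameso_pair_def ameso_set_def)
qed

end
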